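(* For the $2$-server problem on the line, for any instance $I$, any prediction, and any $\lambda\in[0,1]$, there is $c\ge0$ depending only on the initial configuration such that $\mathrm{LambdaDC}(I)\le(1+\lambda)\cdot\mathrm{FtP}(I)+c$.
   Context: The $2$-server problem on the line: servers on $\mathbb{R}$ labeled $s_1\le s_2$, requests revealed online and served by moving a server to them; cost = total distance moved. A prediction gives for each request $r_t$ an index $p_t\in\{1,2\}$; FtP is the algorithm serving each request by the predicted server (relabeling servers by position), and $\mathrm{FtP}(I)$ its cost for the given prediction. LambdaDC (given the same prediction): if $r_t<s_1$ or $r_t>s_2$, move only the closest server; if $s_1<r_t<s_2$ and $p_t=1$, move $s_1$ at speed $1$ and $s_2$ at speed $\lambda$ towards $r_t$ until one reaches it; if $p_t=2$, the speeds are swapped. *)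

theory Defs
  imports Complex_Main
begin

text \<open>Configuration of the two servers: a pair (s1, s2) with s1 \<le> s2 (servers labeled
by position). A request is a real number, a prediction is an index in {1,2}.\<close>

type_synonym config = "real \<times> real"

definition ftp_step :: "config \<Rightarrow> real \<Rightarrow> nat \<Rightarrow> config \<times> real" where
  "ftp_step s r p =
     (let (a, b) = s in
      if p = 1 then ((min r b, max r b), \<bar>a - r\<bar>)
      else ((min a r, max a r), \<bar>b - r\<bar>))"

fun ftp_cost :: "config \<Rightarrow> (real \<times> nat) list \<Rightarrow> real" where
  "ftp_cost s [] = 0"
| "ftp_cost s ((r, p) # rest) =
     (let (s', c) = ftp_step s r p in c + ftp_cost s' rest)"

text \<open>If s1 < r < s2 and p = 1, s1 moves with speed 1 and s2 with speed \<lambda>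
towards r until one of them reaches r (time t); for p = 2 the speeds are swapped.\<close>
definition lambdadc_step :: "real \<Rightarrow> config \<Rightarrow> real \<Rightarrow> nat \<Rightarrow> config \<times> real" where
  "lambdadc_step lam s r p =
     (let (a, b) = s in
      if r \<le> a then ((r, b), a - r)
      else if b \<le> r then ((a, r), r - b)
      else if p = 1 then
        (let t = (if lam * (r - a) \<le> b - r then r - a else (b - r) / lam)
         in ((a + t, b - lam * t), (1 + lam) * t))
      else
        (let t = (if lam * (b - r) \<le> r - a then b - r else (r - a) / lam)
         in ((a + lam * t, b - t), (1 + lam) * t)))"

fun lambdadc_cost :: "real \<Rightarrow> config \<Rightarrow> (real \<times> nat) list \<Rightarrow> real" where
  "lambdadc_cost lam s [] = 0"
| "lambdadc_cost lam s ((r, p) # rest) =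
     (let (s', c) = lambdadc_step lam s r p in c + lambdadc_cost lam s' rest)"

end

theory Submission
  imports Defs
begin

text \<open>A potential-function argument. Let \<open>M\<close> be the cost of the sorted matching between the
servers of LambdaDC and those of FtP, \<open>w = s\<^sub>2 - s\<^sub>1\<close> the width of LambdaDC's configuration, and
\<open>\<Phi> = (1 + \<lambda>) M + \<lambda> w\<close>. On every request, LambdaDC's cost plus the increase of \<open>\<Phi>\<close> is at most
\<open>1 + \<lambda>\<close> times FtP's cost. Since the sorted matching is a cheapest one, the new \<open>M\<close> may be bounded
through any pairing of the servers: FtP's move raises it by at most FtP's cost; when LambdaDC
moves an outer server by \<open>\<delta>\<close> onto the request, \<open>M\<close> drops by \<open>\<delta>\<close> and \<open>w\<close> grows by \<open>\<delta>\<close>; in the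
interior case LambdaDC's predicted server moves by \<open>t\<close> towards FtP's predicted server, now at the
request, and the other one by \<open>\<lambda> t \<le> t\<close>, so \<open>M\<close> drops by at least \<open>(1 - \<lambda>) t\<close> while \<open>w\<close> drops
by \<open>(1 + \<lambda>) t\<close>. Summing over the requests, LambdaDC costs at most \<open>1 + \<lambda>\<close> times FtP plus the
initial potential \<open>\<lambda> (s\<^sub>2 - s\<^sub>1) \<le> s\<^sub>2 - s\<^sub>1\<close>.\<close>

definition match_dist :: "config \<Rightarrow> config \<Rightarrow> real" where
  "match_dist s f = \<bar>fst s - fst f\<bar> + \<bar>snd s - snd f\<bar>"

definition potential :: "real \<Rightarrow> config \<Rightarrow> config \<Rightarrow> real" where
  "potential lam s f = (1 + lam) * match_dist s f + lam * (snd s - fst s)"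

lemma match_dist_sort_le:
  assumes "a \<le> b"
  shows "match_dist (a, b) (min u v, max u v) \<le> \<bar>a - u\<bar> + \<bar>b - v\<bar>"
  using assms by (auto simp: match_dist_def min_def max_def abs_if)

lemma match_dist_sort_le_swap:
  assumes "a \<le> b"
  shows "match_dist (a, b) (min u v, max u v) \<le> \<bar>a - v\<bar> + \<bar>b - u\<bar>"
  using match_dist_sort_le[OF assms, of v u] by (simp add: min.commute max.commute)

lemma ftp_step_predicted_first:
  "p = 1 \<Longrightarrow> ftp_step (x, y) r p = ((min r y, max r y), \<bar>x - r\<bar>)"
  by (simp add: ftp_step_def)

lemma ftp_step_predicted_second:
  "p \<noteq> 1 \<Longrightarrow> ftp_step (x, y) r p = ((min x r, max x r), \<bar>y - r\<bar>)"
  by (simp add: ftp_step_def)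

lemma match_dist_progress_left:
  assumes "r \<le> a" "a \<le> b"
  shows "match_dist (r, b) (fst (ftp_step (x, y) r p))
           \<le> match_dist (a, b) (x, y) + snd (ftp_step (x, y) r p) - (a - r)"
proof (cases "p = 1")
  case True
  have "match_dist (r, b) (min r y, max r y) \<le> \<bar>b - y\<bar>"
    using match_dist_sort_le[of r b r y] assms by simp
  also have "\<dots> \<le> match_dist (a, b) (x, y) + \<bar>x - r\<bar> - (a - r)"
    by (auto simp: match_dist_def abs_if)
  finally show ?thesis by (simp add: True ftp_step_predicted_first)
next
  case False
  have "match_dist (r, b) (min x r, max x r) \<le> \<bar>b - x\<bar>"
    using match_dist_sort_le_swap[of r b x r] assms by simp
  also have "\<dots> \<le> match_dist (a, b) (x, y) + \<bar>y - r\<bar> - (a - r)"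
    using assms by (auto simp: match_dist_def abs_if)
  finally show ?thesis by (simp add: ftp_step_predicted_second[OF False])
qed

lemma match_dist_progress_right:
  assumes "a \<le> b" "b \<le> r"
  shows "match_dist (a, r) (fst (ftp_step (x, y) r p))
           \<le> match_dist (a, b) (x, y) + snd (ftp_step (x, y) r p) - (r - b)"
proof (cases "p = 1")
  case True
  have "match_dist (a, r) (min r y, max r y) \<le> \<bar>a - y\<bar>"
    using match_dist_sort_le_swap[of a r r y] assms by simp
  also have "\<dots> \<le> match_dist (a, b) (x, y) + \<bar>x - r\<bar> - (r - b)"
    using assms by (auto simp: match_dist_def abs_if)
  finally show ?thesis by (simp add: True ftp_step_predicted_first)
next
  case False
  have "match_dist (a, r) (min x r, max x r) \<le> \<bar>a - x\<bar>"
    using match_dist_sort_le[of a r x r] assms by simp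
  also have "\<dots> \<le> match_dist (a, b) (x, y) + \<bar>y - r\<bar> - (r - b)"
    using assms by (auto simp: match_dist_def abs_if)
  finally show ?thesis by (simp add: ftp_step_predicted_second[OF False])
qed

lemma match_dist_progress_inner_first:
  assumes "p = 1" "0 \<le> u" "u \<le> t" "a + t \<le> r" "r \<le> b - u"
  shows "match_dist (a + t, b - u) (fst (ftp_step (x, y) r p))
           \<le> match_dist (a, b) (x, y) + snd (ftp_step (x, y) r p) - (t - u)"
proof -
  have "match_dist (a + t, b - u) (min r y, max r y) \<le> \<bar>a + t - r\<bar> + \<bar>b - u - y\<bar>"
    by (rule match_dist_sort_le) (use assms in linarith)
  also have "\<dots> \<le> match_dist (a, b) (x, y) + \<bar>x - r\<bar> - (t - u)"
    using assms by (auto simp: match_dist_def abs_if)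
  finally show ?thesis by (simp add: assms(1) ftp_step_predicted_first)
qed

lemma match_dist_progress_inner_second:
  assumes "p \<noteq> 1" "0 \<le> u" "u \<le> t" "a + u \<le> r" "r \<le> b - t"
  shows "match_dist (a + u, b - t) (fst (ftp_step (x, y) r p))
           \<le> match_dist (a, b) (x, y) + snd (ftp_step (x, y) r p) - (t - u)"
proof -
  have "match_dist (a + u, b - t) (min x r, max x r) \<le> \<bar>a + u - x\<bar> + \<bar>b - t - r\<bar>"
    by (rule match_dist_sort_le) (use assms in linarith)
  also have "\<dots> \<le> match_dist (a, b) (x, y) + \<bar>y - r\<bar> - (t - u)"
    using assms by (auto simp: match_dist_def abs_if)
  finally show ?thesis by (simp add: ftp_step_predicted_second[OF assms(1)])
qed

lemma potential_amortized:
  assumes "0 \<le> lam"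
    and progress: "match_dist (a', b') f' \<le> match_dist (a, b) f + d - \<delta>"
    and cost: "C + lam * ((b' - a') - (b - a)) = (1 + lam) * \<delta>"
  shows "C + potential lam (a', b') f' \<le> (1 + lam) * d + potential lam (a, b) f"
proof -
  have "(1 + lam) * match_dist (a', b') f' \<le> (1 + lam) * (match_dist (a, b) f + d - \<delta>)"
    using assms by (intro mult_left_mono) auto
  then show ?thesis using cost by (simp add: potential_def algebra_simps)
qed

lemma meeting_time_bounds:
  fixes lam d\<^sub>1 d\<^sub>2 t :: real
  assumes "0 < d\<^sub>1" "0 < d\<^sub>2"
    and t: "t = (if lam * d\<^sub>1 \<le> d\<^sub>2 then d\<^sub>1 else d\<^sub>2 / lam)"
  shows "0 \<le> t" "t \<le> d\<^sub>1" "lam * t \<le> d\<^sub>2"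
proof -
  have "0 \<le> t \<and> t \<le> d\<^sub>1 \<and> lam * t \<le> d\<^sub>2"
  proof (cases "lam * d\<^sub>1 \<le> d\<^sub>2")
    case False
    then have "0 < lam * d\<^sub>1" using assms by linarith
    then have "0 < lam" using assms by (simp add: zero_less_mult_iff)
    with False assms show ?thesis by (simp add: divide_le_eq mult.commute)
  qed (use assms in simp)
  then show "0 \<le> t" "t \<le> d\<^sub>1" "lam * t \<le> d\<^sub>2" by auto
qed

lemma lambdadc_step_cases:
  obtains (left) "lambdadc_step lam (a, b) r p = ((r, b), a - r)" "r \<le> a"
  | (right) "lambdadc_step lam (a, b) r p = ((a, r), r - b)" "b \<le> r"
  | (inner_first) t where "lambdadc_step lam (a, b) r p = ((a + t, b - lam * t), (1 + lam) * t)"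
      "p = 1" "0 \<le> t" "a + t \<le> r" "r \<le> b - lam * t"
  | (inner_second) t where "lambdadc_step lam (a, b) r p = ((a + lam * t, b - t), (1 + lam) * t)"
      "p \<noteq> 1" "0 \<le> t" "a + lam * t \<le> r" "r \<le> b - t"
proof -
  consider "r \<le> a" | "a < r" "b \<le> r" | "a < r" "r < b" by linarith
  then show thesis
  proof cases
    case 1
    then show thesis by (intro left) (simp_all add: lambdadc_step_def)
  next
    case 2
    then show thesis by (intro right) (simp_all add: lambdadc_step_def)
  next
    case 3
    show thesis
    proof (cases "p = 1")
      case True
      define t where "t = (if lam * (r - a) \<le> b - r then r - a else (b - r) / lam)"
      note bounds = meeting_time_bounds[OF _ _ t_def]
      show thesis
      proof (rule inner_first[of t])
        show "lambdadc_step lam (a, b) r p = ((a + t, b - lam * t), (1 + lam) * t)"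
          using 3 True by (simp add: lambdadc_step_def t_def Let_def)
      qed (use True 3 bounds in auto)
    next
      case False
      define t where "t = (if lam * (b - r) \<le> r - a then b - r else (r - a) / lam)"
      note bounds = meeting_time_bounds[OF _ _ t_def]
      show thesis
      proof (rule inner_second[of t])
        show "lambdadc_step lam (a, b) r p = ((a + lam * t, b - t), (1 + lam) * t)"
          using 3 False by (simp add: lambdadc_step_def t_def Let_def)
      qed (use False 3 bounds in auto)
    qed
  qed
qed

lemma lambdadc_step_sorted:
  assumes "a \<le> b"
  shows "fst (fst (lambdadc_step lam (a, b) r p)) \<le> snd (fst (lambdadc_step lam (a, b) r p))"
  by (cases rule: lambdadc_step_cases[of lam a b r p]) (use assms in auto)

lemma lambdadc_step_amortized:
  assumes "a \<le> b" "0 \<le> lam" "lam \<le> 1"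
  shows "snd (lambdadc_step lam (a, b) r p)
           + potential lam (fst (lambdadc_step lam (a, b) r p)) (fst (ftp_step (x, y) r p))
         \<le> (1 + lam) * snd (ftp_step (x, y) r p) + potential lam (a, b) (x, y)"
proof (cases rule: lambdadc_step_cases[of lam a b r p])
  case left
  have progress: "match_dist (r, b) (fst (ftp_step (x, y) r p))
                    \<le> match_dist (a, b) (x, y) + snd (ftp_step (x, y) r p) - (a - r)"
    using left assms by (intro match_dist_progress_left)
  show ?thesis
    unfolding left(1) fst_conv snd_conv
    by (rule potential_amortized[OF assms(2) progress]) (simp add: algebra_simps)
next
  case right
  have progress: "match_dist (a, r) (fst (ftp_step (x, y) r p))
                    \<le> match_dist (a, b) (x, y) + snd (ftp_step (x, y) r p) - (r - b)"
    using right assms by (intro match_dist_progress_right)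
  show ?thesis
    unfolding right(1) fst_conv snd_conv
    by (rule potential_amortized[OF assms(2) progress]) (simp add: algebra_simps)
next
  case (inner_first t)
  have "lam * t \<le> t" using inner_first assms by (simp add: mult_left_le_one_le)
  then have progress: "match_dist (a + t, b - lam * t) (fst (ftp_step (x, y) r p))
                    \<le> match_dist (a, b) (x, y) + snd (ftp_step (x, y) r p) - (t - lam * t)"
    using inner_first assms by (intro match_dist_progress_inner_first) simp_all
  show ?thesis
    unfolding inner_first(1) fst_conv snd_conv
    by (rule potential_amortized[OF assms(2) progress]) (simp add: algebra_simps)
next
  case (inner_second t)
  have "lam * t \<le> t" using inner_second assms by (simp add: mult_left_le_one_le)
  then have progress: "match_dist (a + lam * t, b - t) (fst (ftp_step (x, y) r p))
                    \<le> match_dist (a, b) (x, y) + snd (ftp_step (x, y) r p) - (t - lam * t)"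
    using inner_second assms by (intro match_dist_progress_inner_second) simp_all
  show ?thesis
    unfolding inner_second(1) fst_conv snd_conv
    by (rule potential_amortized[OF assms(2) progress]) (simp add: algebra_simps)
qed

lemma lambdadc_cost_le_ftp_cost_plus_potential:
  assumes "0 \<le> lam" "lam \<le> 1" "fst s \<le> snd s"
  shows "lambdadc_cost lam s I \<le> (1 + lam) * ftp_cost f I + potential lam s f"
  using assms(3)
proof (induction I arbitrary: s f)
  case Nil
  then show ?case using assms(1) by (simp add: potential_def match_dist_def)
next
  case (Cons q I)
  obtain r p where q: "q = (r, p)" by fastforce
  obtain a b where s: "s = (a, b)" by fastforce
  obtain x y where f: "f = (x, y)" by fastforce
  obtain s' C where L: "lambdadc_step lam s r p = (s', C)" by fastforce
  obtain f' d where F: "ftp_step f r p = (f', d)" by fastforce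
  have "fst s' \<le> snd s'"
    using lambdadc_step_sorted[of a b lam r p] Cons.prems assms(1) L s by simp
  then have "lambdadc_cost lam s' I \<le> (1 + lam) * ftp_cost f' I + potential lam s' f'"
    by (rule Cons.IH)
  moreover have "C + potential lam s' f' \<le> (1 + lam) * d + potential lam s f"
    using lambdadc_step_amortized[of a b lam r p x y] Cons.prems assms L F s f by simp
  ultimately show ?case using L F q by (simp add: algebra_simps)
qed

theorem lemma5:
  fixes s0 :: config
  assumes "fst s0 \<le> snd s0"
  shows "\<exists>c \<ge> 0. \<forall>lam :: real. \<forall>I :: (real \<times> nat) list.
           0 \<le> lam \<longrightarrow> lam \<le> 1 \<longrightarrow> (\<forall>x \<in> set I. snd x \<in> {1, 2}) \<longrightarrow>
           lambdadc_cost lam s0 I \<le> (1 + lam) * ftp_cost s0 I + c"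
  \<comment> \<open>Both algorithms treat every prediction other than 1 as 2.\<close>
proof (intro exI[of _ "snd s0 - fst s0"] conjI allI impI)
  show "0 \<le> snd s0 - fst s0" using assms by simp
  fix lam :: real and I :: "(real \<times> nat) list"
  assume "0 \<le> lam" "lam \<le> 1"
  then have "potential lam s0 s0 \<le> snd s0 - fst s0"
    using assms by (simp add: potential_def match_dist_def mult_left_le_one_le)
  with lambdadc_cost_le_ftp_cost_plus_potential[OF \<open>0 \<le> lam\<close> \<open>lam \<le> 1\<close> assms]
  show "lambdadc_cost lam s0 I \<le> (1 + lam) * ftp_cost s0 I + (snd s0 - fst s0)"
    by (meson add_left_mono order_trans)
qed

end
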